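(* Let $(X,\mathcal{B},\mu)$ be a standard $\sigma$-finite measure space. Let $\alpha,\beta,\mathcal{C}$ be sub-$\sigma$-algebras of $\mathcal{B}$. Assume that $\mathcal{C}$ is $\sigma$-finite (i.e. $\mu|_{\mathcal{C}}$ is $\sigma$-finite) and non-atomic. Then $$(\mathcal{C}\vee\alpha\vee\beta)^{*}=(\mathcal{C}\vee\alpha)^{*}\vee(\mathcal{C}\vee\beta)^{*}\quad\text{modulo }\mu^{*}.$$
   Context: Poisson suspension of $(X,\mathcal{B},\mu)$: $X^*$ is the space of (counting) measures $\gamma$ on $X$; $\mathcal{B}^*$ is the $\sigma$-algebra generated by the maps $N(B):\gamma\mapsto\gamma(B)$, $B\in\mathcal{B}$. The measure $\mu^*$ is the unique probability measure on $(X^*,\mathcal{B}^* )$ such that, for pairwise disjoint $B_1,\dots,B_k\in\mathcal{B}$, the random variables $N(B_1),\dots,N(B_k)$ are independent. Moreover, each $N(B)$ is Poisson distributed with parameter $\mu(B)$, with $N(B)=\infty$ a.s. if $\mu(B)=\infty$. For a sub-$\sigma$-algebra $\mathcal{C}\subset\mathcal{B}$, $\mathcal{C}^*:=\sigma(\{N(A):A\in\mathcal{C}\})$. *)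

theory Defs
  imports "HOL-Probability.Probability"
begin

definition Xstar :: "'a measure \<Rightarrow> ('a set \<Rightarrow> ennreal) set" where
  "Xstar M = {\<gamma>. measure_space (space M) (sets M) \<gamma> \<and>
                 (\<forall>A\<in>sets M. \<gamma> A = \<infinity> \<or> (\<exists>n::nat. \<gamma> A = of_nat n))}"

definition susp_alg :: "'a measure \<Rightarrow> 'a set set \<Rightarrow> ('a set \<Rightarrow> ennreal) set set" where
  "susp_alg M Cs = sigma_sets (Xstar M)
     {{\<gamma> \<in> Xstar M. \<gamma> A \<in> S} | A S. A \<in> Cs \<and> S \<in> sets (borel :: ennreal measure)}"

definition is_poisson_suspension :: "'a measure \<Rightarrow> ('a set \<Rightarrow> ennreal) measure \<Rightarrow> bool" where
  "is_poisson_suspension M P \<longleftrightarrow>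
     prob_space P \<and> space P = Xstar M \<and> sets P = susp_alg M (sets M) \<and>
     (\<forall>I. finite I \<longrightarrow> I \<subseteq> sets M \<longrightarrow> disjoint I \<longrightarrow>
          prob_space.indep_vars P (\<lambda>_. borel) (\<lambda>A \<gamma>. \<gamma> A) I) \<and>
     (\<forall>A\<in>sets M. emeasure M A < \<infinity> \<longrightarrow> (\<forall>n::nat.
          measure P {\<gamma> \<in> space P. \<gamma> A = of_nat n} =
            measure M A ^ n / fact n * exp (- measure M A))) \<and>
     (\<forall>A\<in>sets M. emeasure M A = \<infinity> \<longrightarrow> (AE \<gamma> in P. \<gamma> A = \<infinity>))"

definition join_alg :: "'a measure \<Rightarrow> 'a set set \<Rightarrow> 'a set set \<Rightarrow> 'a set set" where
  "join_alg M F G = sigma_sets (space M) (F \<union> G)"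

definition join_alg_star :: "'b set \<Rightarrow> 'b set set \<Rightarrow> 'b set set \<Rightarrow> 'b set set" where
  "join_alg_star \<Omega> F G = sigma_sets \<Omega> (F \<union> G)"

definition sub_sigma_algebra_of :: "'a measure \<Rightarrow> 'a set set \<Rightarrow> bool" where
  "sub_sigma_algebra_of M F \<longleftrightarrow> sigma_algebra (space M) F \<and> F \<subseteq> sets M"

definition sigma_finite_on :: "'a measure \<Rightarrow> 'a set set \<Rightarrow> bool" where
  "sigma_finite_on M F \<longleftrightarrow> (\<exists>A. countable A \<and> A \<subseteq> F \<and> \<Union>A = space M \<and>
                                  (\<forall>a\<in>A. emeasure M a \<noteq> \<infinity>))"

definition non_atomic_on :: "'a measure \<Rightarrow> 'a set set \<Rightarrow> bool" where
  "non_atomic_on M F \<longleftrightarrow> (\<forall>A\<in>F. 0 < emeasure M A \<longrightarrow>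
       (\<exists>B\<in>F. B \<subseteq> A \<and> 0 < emeasure M B \<and> emeasure M B < emeasure M A))"

definition eq_mod :: "'b measure \<Rightarrow> 'b set set \<Rightarrow> 'b set set \<Rightarrow> bool" where
  "eq_mod P F G \<longleftrightarrow>
     (\<forall>A\<in>F. \<exists>B\<in>G. (A - B) \<union> (B - A) \<in> null_sets P) \<and>
     (\<forall>B\<in>G. \<exists>A\<in>F. (A - B) \<union> (B - A) \<in> null_sets P)"

end

theory Submission
  imports Defs
begin

(* Write R for the right-hand side.  The inclusion R \<subseteq> (C \<or> \<alpha> \<or> \<beta>)^* is trivial.  Conversely,
   the events agreeing with an R-event up to a null set form a \<sigma>-algebra, so it suffices that
   every count N(A), A \<in> C \<or> \<alpha> \<or> \<beta>, agrees a.e. with an R-measurable function.  For a box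
   F \<inter> a \<inter> b with F \<in> C of finite measure, a \<in> \<alpha>, b \<in> \<beta>, non-atomicity yields partitions of F
   into C-sets of measure at most 2^-n.  A Poisson count puts two or more points into a cell of
   measure m with probability at most m^2, so by Borel-Cantelli almost every configuration
   eventually has at most one point in each cell; then
     N(F \<inter> a \<inter> b) = \<Sum>_Q min (N(Q \<inter> a)) (N(Q \<inter> b)),
   a limit of R-measurable functions.  A Dynkin argument extends this to all sets of C \<or> \<alpha> \<or> \<beta>
   localised to a C-set of finite measure, and \<sigma>-finiteness of C removes the localisation. *)

lemma halve_set:
  assumes sa: "sigma_algebra (space M) C" and CM: "C \<subseteq> sets M" and na: "non_atomic_on M C"
    and Y: "Y \<in> C" "0 < measure M Y" "emeasure M Y \<noteq> \<infinity>"
  shows "\<exists>Z\<in>C. Z \<subseteq> Y \<and> 0 < measure M Z \<and> measure M Z \<le> measure M Y / 2"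
proof -
  interpret sigma_algebra "space M" C by fact
  have "0 < emeasure M Y" using Y emeasure_eq_ennreal_measure[of M Y] by auto
  then obtain B where B: "B \<in> C" "B \<subseteq> Y" "0 < emeasure M B" "emeasure M B < emeasure M Y"
    using na Y unfolding non_atomic_on_def by blast
  have "emeasure M B \<noteq> \<infinity>" using Y(3) B(4) by (auto simp: top_unique)
  then have mB: "0 < measure M B" "measure M B < measure M Y"
    using B Y emeasure_eq_ennreal_measure[of M B] emeasure_eq_ennreal_measure[of M Y]
    by (auto simp: ennreal_less_iff)
  have "measure M (Y - B) = measure M Y - measure M B"
    using Y B CM by (intro measure_Diff) auto
  moreover have "Y - B \<in> C" using Y B by auto
  ultimately show ?thesis
  proof (cases "measure M B \<le> measure M Y / 2")
    case True then show ?thesis using B mB by blast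
  next
    case False then show ?thesis using mB \<open>Y - B \<in> C\<close> \<open>measure M (Y - B) = _\<close>
      by (intro bexI[of _ "Y - B"]) auto
  qed
qed

(* Iterated halving: arbitrarily small subsets of positive measure. *)
lemma small_subset:
  assumes sa: "sigma_algebra (space M) C" and CM: "C \<subseteq> sets M" and na: "non_atomic_on M C"
    and X: "X \<in> C" "0 < measure M X" "emeasure M X \<noteq> \<infinity>" and d: "0 < d"
  shows "\<exists>Y\<in>C. Y \<subseteq> X \<and> 0 < measure M Y \<and> measure M Y \<le> d"
proof -
  have halves: "\<exists>Z\<in>C. Z \<subseteq> X \<and> 0 < measure M Z \<and> measure M Z \<le> measure M X / 2^k" for k
  proof (induction k)
    case 0 then show ?case using X by auto
  next
    case (Suc k)
    then obtain Z where Z: "Z \<in> C" "Z \<subseteq> X" "0 < measure M Z" "measure M Z \<le> measure M X / 2^k"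
      by blast
    have "emeasure M Z \<le> emeasure M X" using Z X CM by (intro emeasure_mono) auto
    then have "emeasure M Z \<noteq> \<infinity>" using X(3) by (auto simp: top_unique)
    from halve_set[OF sa CM na Z(1) Z(3) this] obtain W where
      "W \<in> C" "W \<subseteq> Z" "0 < measure M W" "measure M W \<le> measure M Z / 2" by blast
    moreover have "measure M Z / 2 \<le> measure M X / 2 ^ Suc k" using Z(4) by simp
    ultimately show ?case using Z(2) by (intro bexI[of _ W]) auto
  qed
  obtain k where "measure M X / d < 2 ^ k" using real_arch_pow[of 2 "measure M X / d"] by auto
  then have "measure M X / 2^k < d" using d by (simp add: divide_less_eq mult.commute)
  with halves[of k] show ?thesis by (meson order.trans less_imp_le)
qed

lemma half_maximal_subset:
  assumes "{} \<in> C" "0 \<le> d"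
  shows "\<exists>Y\<in>C. Y \<subseteq> R \<and> measure M Y \<le> d \<and>
           (\<forall>Z\<in>C. Z \<subseteq> R \<longrightarrow> measure M Z \<le> d \<longrightarrow> measure M Z \<le> 2 * measure M Y)"
proof -
  define cand where "cand = {Y \<in> C. Y \<subseteq> R \<and> measure M Y \<le> d}"
  define s where "s = Sup (measure M ` cand)"
  have empty: "{} \<in> cand" using assms unfolding cand_def by auto
  have le_s: "measure M Z \<le> s" if "Z \<in> cand" for Z
    unfolding s_def using that by (intro cSup_upper bdd_aboveI[of _ d]) (auto simp: cand_def)
  obtain Y where "Y \<in> cand" "s \<le> 2 * measure M Y"
  proof (cases "s = 0")
    case True then show ?thesis using that[OF empty] by simp
  next
    case False
    then have "s / 2 < s" using le_s[OF empty] by simp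
    then obtain Y where "Y \<in> cand" "s / 2 < measure M Y"
      unfolding s_def using empty
      by (subst (asm) less_cSup_iff) (auto intro: bdd_aboveI[of _ d] simp: cand_def)
    then show ?thesis using that by simp
  qed
  then show ?thesis using le_s unfolding cand_def by (intro bexI[of _ Y]) force+
qed

lemma greedy_exhaustion:
  assumes sa: "sigma_algebra (space M) C" and F: "F \<in> C" and d: "0 \<le> d"
  obtains Pc :: "nat \<Rightarrow> 'a set"
  where "\<And>n. Pc n \<in> C" "\<And>n. Pc n \<subseteq> F" "\<And>n. measure M (Pc n) \<le> d" "disjoint_family Pc"
    "\<And>Z n. Z \<in> C \<Longrightarrow> Z \<subseteq> F - (\<Union>n. Pc n) \<Longrightarrow> measure M Z \<le> d \<Longrightarrow>
        measure M Z \<le> 2 * measure M (Pc n)"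
proof -
  interpret sigma_algebra "space M" C by fact
  have "\<forall>R. \<exists>Y. Y \<in> C \<and> Y \<subseteq> R \<and> measure M Y \<le> d \<and>
      (\<forall>Z\<in>C. Z \<subseteq> R \<longrightarrow> measure M Z \<le> d \<longrightarrow> measure M Z \<le> 2 * measure M Y)"
    using half_maximal_subset[where C = C and d = d and M = M] d by blast
  then obtain pick where pick: "\<And>R. pick R \<in> C \<and> pick R \<subseteq> R \<and> measure M (pick R) \<le> d \<and>
      (\<forall>Z\<in>C. Z \<subseteq> R \<longrightarrow> measure M Z \<le> d \<longrightarrow> measure M Z \<le> 2 * measure M (pick R))"
    by metis
  define Rs where "Rs n = ((\<lambda>X. X - pick X) ^^ n) F" for n
  define Pc where "Pc n = pick (Rs n)" for n
  have Rs_Suc: "Rs (Suc n) = Rs n - Pc n" for n unfolding Rs_def Pc_def by simp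
  have Rs_C: "Rs n \<in> C" for n
    by (induction n) (auto simp: Rs_def F pick)
  have Pc_Rs: "Pc n \<subseteq> Rs n" for n unfolding Pc_def using pick by blast
  have "decseq Rs" by (rule decseq_SucI) (auto simp: Rs_Suc)
  then have Rs_F: "Rs n \<subseteq> F" for n using decseqD[of Rs 0 n] by (simp add: Rs_def)
  have "Pc = (\<lambda>n. (F - Rs (Suc n)) - (F - Rs n))" using Pc_Rs Rs_F by (fastforce simp: Rs_Suc)
  moreover have "disjoint_family (\<lambda>n. (F - Rs (Suc n)) - (F - Rs n))"
    by (rule disjoint_family_Suc) (auto simp: Rs_Suc)
  ultimately have disj: "disjoint_family Pc" by simp
  have rem: "F - (\<Union>n. Pc n) \<subseteq> Rs n" for n
    by (induction n) (auto simp: Rs_Suc Rs_def[of 0])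
  show ?thesis
  proof (rule that[OF _ _ _ disj])
    show "Pc n \<in> C" "measure M (Pc n) \<le> d" for n using pick unfolding Pc_def by blast+
    show "Pc n \<subseteq> F" for n by (rule order.trans[OF Pc_Rs Rs_F])
    show "measure M Z \<le> 2 * measure M (Pc n)"
      if "Z \<in> C" "Z \<subseteq> F - (\<Union>n. Pc n)" "measure M Z \<le> d" for Z n
    proof -
      have "Z \<subseteq> Rs n" using that(2) rem[of n] by (rule order.trans)
      then show ?thesis using pick[of "Rs n"] that(1,3) unfolding Pc_def by blast
    qed
  qed
qed

(* A set of finite measure in a non-atomic \<sigma>-algebra C is a countable disjoint union of C-sets
   of measure at most d: the greedy remainder is null, as it has no small subset of positive
   measure left. *)
lemma partition_small:
  assumes sa: "sigma_algebra (space M) C" and CM: "C \<subseteq> sets M" and na: "non_atomic_on M C"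
    and F: "F \<in> C" "emeasure M F \<noteq> \<infinity>" and d: "0 < d"
  obtains Q :: "nat \<Rightarrow> 'a set"
  where "\<And>i. Q i \<in> C" "disjoint_family Q" "(\<Union>i. Q i) = F" "\<And>i. measure M (Q i) \<le> d"
proof -
  interpret sigma_algebra "space M" C by fact
  obtain Pc :: "nat \<Rightarrow> 'a set" where Pc: "\<And>n. Pc n \<in> C" "\<And>n. Pc n \<subseteq> F" "\<And>n. measure M (Pc n) \<le> d"
      "disjoint_family Pc" "\<And>Z n. Z \<in> C \<Longrightarrow> Z \<subseteq> F - (\<Union>n. Pc n) \<Longrightarrow> measure M Z \<le> d \<Longrightarrow>
        measure M Z \<le> 2 * measure M (Pc n)"
    using greedy_exhaustion[OF sa F(1) less_imp_le[OF d]] by blast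
  define Rem where "Rem = F - (\<Union>n. Pc n)"
  have FM: "F \<in> sets M" using F CM by auto
  have fin: "emeasure M Z \<noteq> \<infinity>" if "Z \<subseteq> F" "Z \<in> sets M" for Z
    using F(2) emeasure_mono[OF that(1) FM] by (auto simp: top_unique)
  have Rem_C: "Rem \<in> C" unfolding Rem_def using F(1) Pc(1) by (intro Diff countable_UN) auto
  have "(\<Union>n. Pc n) \<in> C" using Pc(1) by (intro countable_UN) auto
  then have "emeasure M (\<Union>n. Pc n) \<noteq> \<infinity>" using Pc(2) CM by (intro fin) auto
  then have "(\<lambda>n. measure M (Pc n)) sums measure M (\<Union>n. Pc n)"
    using Pc(1,4) CM by (intro measure_UNION) auto
  then have Pc_0: "(\<lambda>n. measure M (Pc n)) \<longlonglongrightarrow> 0"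
    using summable_LIMSEQ_zero sums_summable by blast
  (* Hence the remainder is null: a small subset of positive measure would have been chosen. *)
  have Rem_0: "measure M Rem = 0"
  proof (rule ccontr)
    assume "measure M Rem \<noteq> 0"
    then have "0 < measure M Rem" using measure_nonneg[of M Rem] by linarith
    moreover have "emeasure M Rem \<noteq> \<infinity>" using Rem_C CM by (intro fin) (auto simp: Rem_def)
    ultimately obtain Y where Y: "Y \<in> C" "Y \<subseteq> Rem" "0 < measure M Y" "measure M Y \<le> d"
      using small_subset[OF sa CM na Rem_C _ _ d] by blast
    have "measure M Y \<le> 2 * measure M (Pc n)" for n
      using Pc(5)[OF Y(1) _ Y(4)] Y(2) by (simp add: Rem_def)
    moreover have "(\<lambda>n. 2 * measure M (Pc n)) \<longlonglongrightarrow> 2 * 0"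
      by (intro tendsto_mult tendsto_const Pc_0)
    ultimately have "measure M Y \<le> 2 * 0"
      by (intro LIMSEQ_le_const[of "\<lambda>n. 2 * measure M (Pc n)"]) auto
    then show False using Y(3) by simp
  qed
  define Q where "Q = case_nat Rem Pc"
  have "Q i \<in> C" for i using Rem_C Pc(1) by (cases i) (auto simp: Q_def)
  moreover have "disjoint_family Q"
    using Pc(4) unfolding disjoint_family_on_def Q_def Rem_def by (auto split: nat.split)
  moreover have "(\<Union>i. Q i) = F"
  proof -
    have "(\<Union>i. Q i) = Q 0 \<union> (\<Union>n. Q (Suc n))" by (auto simp: UN_iff) (metis not0_implies_Suc)
    then have "(\<Union>i. Q i) = Rem \<union> (\<Union>n. Pc n)" by (simp add: Q_def)
    then show ?thesis using Pc(2) by (auto simp: Rem_def)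
  qed
  moreover have "measure M (Q i) \<le> d" for i using Rem_0 d Pc(3) by (cases i) (simp_all add: Q_def)
  ultimately show ?thesis by (rule that)
qed

(* A configuration \<gamma> \<in> X^* is a measure; config_measure turns it into a measure on M so that the
   library's measure theory applies to it. *)
definition config_measure :: "'a measure \<Rightarrow> ('a set \<Rightarrow> ennreal) \<Rightarrow> 'a measure" where
  "config_measure M \<gamma> = measure_of (space M) (sets M) \<gamma>"

lemma config_emeasure:
  assumes "\<gamma> \<in> Xstar M" "A \<in> sets M"
  shows "emeasure (config_measure M \<gamma>) A = \<gamma> A"
  using assms unfolding config_measure_def Xstar_def
  by (intro emeasure_measure_of_sigma) (auto simp: measure_space_def)

lemma sets_config_measure [simp]: "sets (config_measure M \<gamma>) = sets M"
  unfolding config_measure_def by (auto simp: sets.sets_into_space)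

lemma config_suminf:
  assumes "\<gamma> \<in> Xstar M" "range A \<subseteq> sets M" "disjoint_family A"
  shows "(\<Sum>i. \<gamma> (A i)) = \<gamma> (\<Union>i. A i)"
  using suminf_emeasure[of A "config_measure M \<gamma>"] assms config_emeasure[OF assms(1)]
  by (auto simp: sets.countable_UN')

lemma config_empty: "\<gamma> \<in> Xstar M \<Longrightarrow> \<gamma> {} = 0"
  using config_emeasure[of \<gamma> M "{}"] by simp

lemma config_mono:
  "\<gamma> \<in> Xstar M \<Longrightarrow> A \<in> sets M \<Longrightarrow> B \<in> sets M \<Longrightarrow> A \<subseteq> B \<Longrightarrow> \<gamma> A \<le> \<gamma> B"
  using emeasure_mono[of A B "config_measure M \<gamma>"] by (simp add: config_emeasure)

lemma config_add:
  "\<gamma> \<in> Xstar M \<Longrightarrow> A \<in> sets M \<Longrightarrow> B \<in> sets M \<Longrightarrow> A \<inter> B = {} \<Longrightarrow> \<gamma> A + \<gamma> B = \<gamma> (A \<union> B)"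
  using plus_emeasure[of A "config_measure M \<gamma>" B] by (simp add: config_emeasure)

lemma config_diff:
  "\<gamma> \<in> Xstar M \<Longrightarrow> A \<in> sets M \<Longrightarrow> E \<in> sets M \<Longrightarrow> A \<subseteq> E \<Longrightarrow> \<gamma> A \<noteq> \<infinity> \<Longrightarrow>
    \<gamma> (E - A) = \<gamma> E - \<gamma> A"
  using emeasure_Diff[of "config_measure M \<gamma>" A E] by (simp add: config_emeasure)

lemma config_le_1:
  assumes g: "\<gamma> \<in> Xstar M" and A: "A \<in> sets M" and le: "\<gamma> A \<le> 1"
  shows "\<gamma> A = 0 \<or> \<gamma> A = 1"
proof -
  obtain n :: nat where "\<gamma> A = of_nat n"
    using g A le unfolding Xstar_def by (auto simp: top_unique)
  moreover from this have "n \<le> 1" using le by (simp add: ennreal_of_nat_eq_real_of_nat)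
  ultimately show ?thesis by (auto simp: le_Suc_eq)
qed

lemma config_min:
  assumes g: "\<gamma> \<in> Xstar M" and S: "X \<in> sets M" "a \<in> sets M" "b \<in> sets M" and X1: "\<gamma> X \<le> 1"
  shows "\<gamma> (X \<inter> a \<inter> b) = min (\<gamma> (X \<inter> a)) (\<gamma> (X \<inter> b))"
proof -
  have sub: "\<gamma> Y \<le> \<gamma> X" if "Y \<in> sets M" "Y \<subseteq> X" for Y using config_mono[OF g that(1) S(1) that(2)] .
  have v: "\<gamma> Y = 0 \<or> \<gamma> Y = 1" if "Y \<in> sets M" "Y \<subseteq> X" for Y
    using config_le_1[OF g that(1)] sub[OF that] X1 by auto
  have le: "\<gamma> (X \<inter> a \<inter> b) \<le> \<gamma> (X \<inter> a)" "\<gamma> (X \<inter> a \<inter> b) \<le> \<gamma> (X \<inter> b)"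
    using S by (auto intro!: config_mono[OF g])
  have "\<gamma> (X \<inter> a - b) + \<gamma> (X \<inter> b) = \<gamma> ((X \<inter> a - b) \<union> (X \<inter> b))"
    using S by (intro config_add[OF g]) auto
  also have "\<dots> \<le> 1" using sub[of "(X \<inter> a - b) \<union> (X \<inter> b)"] S X1 by (auto intro: order.trans)
  finally have "\<gamma> (X \<inter> a - b) + \<gamma> (X \<inter> b) \<le> 1" .
  moreover have "\<gamma> (X \<inter> a \<inter> b) + \<gamma> (X \<inter> a - b) = \<gamma> (X \<inter> a \<inter> b \<union> (X \<inter> a - b))"
    using S by (intro config_add[OF g]) auto
  moreover have "X \<inter> a \<inter> b \<union> (X \<inter> a - b) = X \<inter> a" by blast
  ultimately show ?thesis
    using le v[of "X \<inter> a"] v[of "X \<inter> b"] v[of "X \<inter> a \<inter> b"] v[of "X \<inter> a - b"] S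
    by (auto simp: min_def)
qed

lemma config_partition_min:
  assumes g: "\<gamma> \<in> Xstar M" and Q: "range Q \<subseteq> sets M" "disjoint_family Q" "(\<Union>i. Q i) = F"
    and ab: "a \<in> sets M" "b \<in> sets M" and le1: "\<And>i. \<gamma> (Q i) \<le> 1"
  shows "\<gamma> (F \<inter> a \<inter> b) = (\<Sum>i. min (\<gamma> (Q i \<inter> a)) (\<gamma> (Q i \<inter> b)))"
proof -
  have "F \<inter> a \<inter> b = (\<Union>i. Q i \<inter> a \<inter> b)" using Q(3) by blast
  then have "\<gamma> (F \<inter> a \<inter> b) = \<gamma> (\<Union>i. Q i \<inter> a \<inter> b)" by simp
  also have "\<dots> = (\<Sum>i. \<gamma> (Q i \<inter> a \<inter> b))"
    using Q(1,2) ab by (intro config_suminf[OF g, symmetric]) (auto simp: disjoint_family_on_def)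
  also have "\<dots> = (\<Sum>i. min (\<gamma> (Q i \<inter> a)) (\<gamma> (Q i \<inter> b)))"
    using Q(1) ab by (intro suminf_cong config_min[OF g _ _ _ le1]) auto
  finally show ?thesis .
qed

lemma susp_alg_mono: "Cs \<subseteq> Ds \<Longrightarrow> susp_alg M Cs \<subseteq> susp_alg M Ds"
  unfolding susp_alg_def by (rule sigma_sets_subseteq) blast

lemma susp_alg_Pow: "susp_alg M Cs \<subseteq> Pow (Xstar M)"
  unfolding susp_alg_def
  using sigma_sets_into_sp[of "{{\<gamma> \<in> Xstar M. \<gamma> A \<in> S} |A S. A \<in> Cs \<and> S \<in> sets borel}" "Xstar M"]
  by auto

lemma count_event_susp_alg:
  "A \<in> Cs \<Longrightarrow> S \<in> sets borel \<Longrightarrow> {\<gamma> \<in> Xstar M. \<gamma> A \<in> S} \<in> susp_alg M Cs"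
  unfolding susp_alg_def by (rule sigma_sets.Basic) blast

locale poisson_suspension =
  fixes M :: "'a measure" and P :: "('a set \<Rightarrow> ennreal) measure"
  assumes poisson: "is_poisson_suspension M P"
begin

lemma prob_space_P: "prob_space P"
  and space_P: "space P = Xstar M"
  and sets_P: "sets P = susp_alg M (sets M)"
  using poisson unfolding is_poisson_suspension_def by auto

lemma count_event: "A \<in> sets M \<Longrightarrow> S \<in> sets borel \<Longrightarrow> {\<gamma> \<in> space P. \<gamma> A \<in> S} \<in> sets P"
  using count_event_susp_alg[of A "sets M" S M] by (simp add: space_P sets_P)

lemma prob_count_eq:
  "A \<in> sets M \<Longrightarrow> emeasure M A \<noteq> \<infinity> \<Longrightarrow>
    measure P {\<gamma> \<in> space P. \<gamma> A = of_nat n} = measure M A ^ n / fact n * exp (- measure M A)"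
  using poisson unfolding is_poisson_suspension_def by (auto simp: less_top)

(* A set of finite measure a.s. receives finitely many points, since the Poisson weights sum to 1. *)
lemma AE_count_finite:
  assumes A: "A \<in> sets M" "emeasure M A \<noteq> \<infinity>"
  shows "AE \<gamma> in P. \<gamma> A \<noteq> \<infinity>"
proof -
  interpret prob_space P by (rule prob_space_P)
  define m where "m = measure M A"
  define E where "E n = {\<gamma> \<in> space P. \<gamma> A = of_nat n}" for n :: nat
  have "(\<lambda>n. measure P (E n)) sums measure P (\<Union>n. E n)"
    using count_event[OF A(1), of "{of_nat _}"] unfolding E_def
    by (intro measure_UNION) (auto simp: disjoint_family_on_def)
  moreover have "(\<lambda>n. measure P (E n)) sums (exp m * exp (- m))"
    using sums_mult2[OF exp_converges[of m], of "exp (-m)"] prob_count_eq[OF A] unfolding E_def m_def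
    by (simp add: divide_inverse mult.commute)
  ultimately have "measure P (\<Union>n. E n) = 1" by (simp add: exp_minus_inverse sums_unique2)
  then have "AE \<gamma> in P. \<gamma> \<in> (\<Union>n. E n)" by (rule AE_prob_1)
  then show ?thesis by eventually_elim (auto simp: E_def)
qed

lemma prob_count_ge_2:
  assumes A: "A \<in> sets M" "emeasure M A \<noteq> \<infinity>"
  shows "measure P {\<gamma> \<in> space P. 1 < \<gamma> A} \<le> (measure M A)^2"
proof -
  interpret prob_space P by (rule prob_space_P)
  define m where "m = measure M A"
  define E where "E n = {\<gamma> \<in> space P. \<gamma> A = of_nat n}" for n :: nat
  have EP: "E n \<in> sets P" for n unfolding E_def using count_event[OF A(1), of "{of_nat n}"] by simp
  have "{\<gamma> \<in> space P. 1 < \<gamma> A} = space P - (E 0 \<union> E 1)"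
    using config_le_1[OF _ A(1)] by (force simp: E_def space_P not_less)
  moreover have "measure P (E 0 \<union> E 1) = measure P (E 0) + measure P (E 1)"
    by (rule finite_measure_Union[OF EP EP]) (auto simp: E_def)
  ultimately have "measure P {\<gamma> \<in> space P. 1 < \<gamma> A} = 1 - (measure P (E 0) + measure P (E 1))"
    using prob_compl[of "E 0 \<union> E 1"] EP by simp
  also have "\<dots> = 1 - (exp (-m) + m * exp (-m))"
    using prob_count_eq[OF A, of 0] prob_count_eq[OF A, of 1] by (simp add: E_def m_def)
  also have "\<dots> \<le> m^2"
  proof -
    have "1 - m \<le> exp (-m)" using exp_ge_add_one_self[of "-m"] by simp
    then have "(1 - m) * (1 + m) \<le> exp (-m) * (1 + m)" by (intro mult_right_mono) (auto simp: m_def)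
    then show ?thesis by (simp add: algebra_simps power2_eq_square)
  qed
  finally show ?thesis unfolding m_def .
qed

(* Union bound: if a partition of F has cells of measure at most \<delta>, some cell receives two or
   more points with probability at most \<delta> \<mu>(F). *)
lemma prob_partition_multiple:
  fixes Q :: "nat \<Rightarrow> 'a set"
  assumes F: "F \<in> sets M" "emeasure M F \<noteq> \<infinity>"
    and Q: "range Q \<subseteq> sets M" "disjoint_family Q" "(\<Union>i. Q i) = F"
    and small: "\<And>i. measure M (Q i) \<le> \<delta>"
  shows "measure P (\<Union>i. {\<gamma> \<in> space P. 1 < \<gamma> (Q i)}) \<le> \<delta> * measure M F"
proof -
  interpret prob_space P by (rule prob_space_P)
  have QF: "Q i \<subseteq> F" for i using Q(3) by blast
  have Qfin: "emeasure M (Q i) \<noteq> \<infinity>" for i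
    using F(2) emeasure_mono[OF QF[of i] F(1)] by (auto simp: top_unique)
  have \<delta>: "0 \<le> \<delta>" using small[of 0] measure_nonneg[of M "Q 0"] by linarith
  have ev: "{\<gamma> \<in> space P. 1 < \<gamma> (Q i)} \<in> sets P" for i
    using count_event[of "Q i" "{1<..}"] Q(1) by auto
  have "emeasure P (\<Union>i. {\<gamma> \<in> space P. 1 < \<gamma> (Q i)}) \<le> (\<Sum>i. emeasure P {\<gamma> \<in> space P. 1 < \<gamma> (Q i)})"
    using ev by (intro emeasure_subadditive_countably) auto
  also have "\<dots> \<le> (\<Sum>i. ennreal \<delta> * emeasure M (Q i))"
  proof (intro suminf_le allI)
    fix i
    have "measure P {\<gamma> \<in> space P. 1 < \<gamma> (Q i)} \<le> (measure M (Q i))^2"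
      using Q(1) Qfin by (intro prob_count_ge_2) auto
    also have "\<dots> \<le> \<delta> * measure M (Q i)"
      unfolding power2_eq_square by (intro mult_right_mono small) auto
    finally show "emeasure P {\<gamma> \<in> space P. 1 < \<gamma> (Q i)} \<le> ennreal \<delta> * emeasure M (Q i)"
      using Qfin[of i] \<delta>
      by (simp add: emeasure_eq_measure emeasure_eq_ennreal_measure ennreal_mult[symmetric] ennreal_leI)
  qed auto
  also have "\<dots> = ennreal \<delta> * emeasure M F"
    using suminf_emeasure[OF Q(1,2)] Q(3) by simp
  also have "\<dots> = ennreal (\<delta> * measure M F)"
    using F(2) \<delta> by (simp add: emeasure_eq_ennreal_measure ennreal_mult)
  finally show ?thesis using \<delta> by (simp add: emeasure_eq_measure ennreal_le_iff)
qed

(* Borel--Cantelli: along partitions of F into cells of geometrically decreasing measure,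
   almost every configuration eventually has at most one point in every cell. *)
lemma AE_eventually_simple:
  fixes Q :: "nat \<Rightarrow> nat \<Rightarrow> 'a set"
  assumes F: "F \<in> sets M" "emeasure M F \<noteq> \<infinity>"
    and Q: "\<And>n. range (Q n) \<subseteq> sets M" "\<And>n. disjoint_family (Q n)" "\<And>n. (\<Union>i. Q n i) = F"
    and small: "\<And>n i. measure M (Q n i) \<le> (1/2)^n"
  shows "AE \<gamma> in P. eventually (\<lambda>n. \<forall>i. \<gamma> (Q n i) \<le> 1) sequentially"
proof -
  interpret prob_space P by (rule prob_space_P)
  define B where "B n = (\<Union>i. {\<gamma> \<in> space P. 1 < \<gamma> (Q n i)})" for n
  have BP: "B n \<in> sets P" for n
    unfolding B_def using count_event[of "Q n _" "{1<..}"] Q(1) by (intro sets.countable_UN') auto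
  have "summable (\<lambda>n. measure P (B n))"
  proof (rule summable_comparison_test)
    have "measure P (B n) \<le> (1/2)^n * measure M F" for n
      unfolding B_def by (rule prob_partition_multiple[OF F Q small])
    then show "\<exists>N. \<forall>n\<ge>N. norm (measure P (B n)) \<le> (1/2)^n * measure M F" by auto
    show "summable (\<lambda>n. (1/2::real)^n * measure M F)" by (intro summable_mult2 summable_geometric) auto
  qed
  then have "AE \<gamma> in P. eventually (\<lambda>n. \<gamma> \<in> space P - B n) sequentially"
    using BP by (intro borel_cantelli_AE1) (auto simp: less_top[symmetric])
  then show ?thesis
  proof eventually_elim
    case (elim \<gamma>)
    then show ?case by (rule eventually_mono) (auto simp: B_def not_less)
  qed
qed

end

definition ae_borel :: "'b measure \<Rightarrow> 'b measure \<Rightarrow> ('b \<Rightarrow> ennreal) \<Rightarrow> bool" where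
  "ae_borel P N f \<longleftrightarrow> (\<exists>g \<in> borel_measurable N. AE x in P. f x = g x)"

lemma ae_borelI: "f \<in> borel_measurable N \<Longrightarrow> ae_borel P N f"
  unfolding ae_borel_def by auto

lemma ae_borel_cong:
  assumes "ae_borel P N f" "AE x in P. f x = h x"
  shows "ae_borel P N h"
proof -
  obtain g where "g \<in> borel_measurable N" "AE x in P. f x = g x"
    using assms(1) unfolding ae_borel_def by blast
  moreover from this(2) assms(2) have "AE x in P. h x = g x" by eventually_elim simp
  ultimately show ?thesis unfolding ae_borel_def by blast
qed

lemma ae_borel_suminf:
  assumes "\<And>i::nat. ae_borel P N (f i)"
  shows "ae_borel P N (\<lambda>x. \<Sum>i. f i x)"
proof -
  obtain g where g: "\<And>i. g i \<in> borel_measurable N" "\<And>i. AE x in P. f i x = g i x"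
    using assms unfolding ae_borel_def by metis
  have "AE x in P. \<forall>i. f i x = g i x" using g(2) by (simp add: AE_all_countable)
  then have "AE x in P. (\<Sum>i. f i x) = (\<Sum>i. g i x)" by eventually_elim simp
  moreover have "(\<lambda>x. \<Sum>i. g i x) \<in> borel_measurable N" using g(1) by measurable
  ultimately show ?thesis unfolding ae_borel_def by (intro bexI[of _ "\<lambda>x. \<Sum>i. g i x"])
qed

lemma ae_borel_diff:
  assumes "ae_borel P N f" "ae_borel P N h"
  shows "ae_borel P N (\<lambda>x. f x - h x)"
proof -
  obtain g1 g2 where g: "g1 \<in> borel_measurable N" "AE x in P. f x = g1 x"
      "g2 \<in> borel_measurable N" "AE x in P. h x = g2 x"
    using assms unfolding ae_borel_def by blast
  have "AE x in P. f x - h x = g1 x - g2 x" using g(2,4) by eventually_elim simp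
  moreover have "(\<lambda>x. g1 x - g2 x) \<in> borel_measurable N" using g(1,3) by measurable
  ultimately show ?thesis unfolding ae_borel_def by (intro bexI[of _ "\<lambda>x. g1 x - g2 x"])
qed

lemma ae_borel_eventually:
  assumes h: "\<And>n::nat. h n \<in> borel_measurable N"
    and ev: "AE x in P. eventually (\<lambda>n. h n x = f x) sequentially"
  shows "ae_borel P N f"
proof -
  have "AE x in P. f x = liminf (\<lambda>n. h n x)"
    using ev
  proof eventually_elim
    case (elim x)
    then have "(\<lambda>n. h n x) \<longlonglongrightarrow> f x" by (rule tendsto_eventually)
    then show ?case by (simp add: lim_imp_Liminf)
  qed
  moreover have "(\<lambda>x. liminf (\<lambda>n. h n x)) \<in> borel_measurable N" using h by measurable
  ultimately show ?thesis unfolding ae_borel_def by (intro bexI[of _ "\<lambda>x. liminf (\<lambda>n. h n x)"])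
qed

(* The sets which coincide, up to a P-null set, with a member of a sub-sigma-algebra F form a
   sigma-algebra; so it suffices to check this property on generators. *)
lemma null_approx_sigma_sets:
  assumes X: "X \<in> sigma_sets (space P) G"
    and F: "sigma_algebra (space P) F" "F \<subseteq> sets P" and G: "G \<subseteq> sets P"
    and approx: "\<And>X. X \<in> G \<Longrightarrow> \<exists>Y\<in>F. sym_diff X Y \<in> null_sets P"
  shows "\<exists>Y\<in>F. sym_diff X Y \<in> null_sets P"
  using X
proof induction
  case (Basic X) then show ?case by (rule approx)
next
  case Empty
  have "{} \<in> F" using F(1) by (simp add: sigma_algebra_iff2)
  then show ?case by (intro bexI[of _ "{}"]) auto
next
  case (Compl X)
  then obtain Y where Y: "Y \<in> F" "sym_diff X Y \<in> null_sets P" by blast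
  have "X \<in> sets P" using Compl(1) G by (meson sets.sigma_sets_subset subsetD)
  then have "sym_diff (space P - X) (space P - Y) \<in> null_sets P"
    using Y F(2) by (intro null_sets_subset[OF Y(2)]) auto
  moreover have "space P - Y \<in> F" using Y(1) F(1) by (simp add: sigma_algebra_iff2)
  ultimately show ?case by blast
next
  case (Union X)
  then obtain Y where Y: "\<And>i. Y i \<in> F" "\<And>i. sym_diff (X i) (Y i) \<in> null_sets P" by metis
  have "X i \<in> sets P" for i using Union(1) G by (meson sets.sigma_sets_subset subsetD)
  then have "(\<Union>i. X i) \<in> sets P" "(\<Union>i. Y i) \<in> sets P" using Y(1) F(2) by auto
  then have "sym_diff (\<Union>i. X i) (\<Union>i. Y i) \<in> null_sets P"
    by (intro null_sets_subset[OF null_sets_UN[OF Y(2)]]) auto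
  moreover have "(\<Union>i. Y i) \<in> F" using Y(1) F(1) unfolding sigma_algebra_iff2 by blast
  ultimately show ?case by blast
qed

lemma join_alg_sub_sigma_algebra:
  assumes "sub_sigma_algebra_of M F" "sub_sigma_algebra_of M G"
  shows "sub_sigma_algebra_of M (join_alg M F G)"
proof -
  have "F \<union> G \<subseteq> sets M" using assms unfolding sub_sigma_algebra_of_def by auto
  then show ?thesis
    unfolding sub_sigma_algebra_of_def join_alg_def
    using sets.sets_into_space by (auto intro!: sigma_algebra_sigma_sets sets.sigma_sets_subset)
qed

lemma join_alg_upper: "F \<subseteq> join_alg M F G" "G \<subseteq> join_alg M F G"
  unfolding join_alg_def by auto

lemma sigma_finite_on_partition:
  assumes C: "sub_sigma_algebra_of M C" and fin: "sigma_finite_on M C"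
  obtains D :: "nat \<Rightarrow> 'a set"
  where "\<And>i. D i \<in> C" "\<And>i. emeasure M (D i) \<noteq> \<infinity>" "disjoint_family D" "(\<Union>i. D i) = space M"
proof -
  interpret sigma_algebra "space M" C using C by (simp add: sub_sigma_algebra_of_def)
  obtain K where K: "countable K" "K \<subseteq> C" "\<Union>K = space M" "\<forall>k\<in>K. emeasure M k \<noteq> \<infinity>"
    using fin unfolding sigma_finite_on_def by blast
  define E where "E = from_nat_into (insert {} K)"
  have E: "range E = insert {} K" unfolding E_def using K(1) by (simp add: range_from_nat_into)
  have "disjointed E i \<in> C" for i using E K(2) range_disjointed_sets[of E] by auto
  moreover have "emeasure M (disjointed E i) \<noteq> \<infinity>" for i
  proof -
    have "E i \<in> insert {} K" using E by blast
    then have "emeasure M (E i) \<noteq> \<infinity>" "E i \<in> sets M" using K C by (auto simp: sub_sigma_algebra_of_def)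
    then show ?thesis using emeasure_mono[OF disjointed_subset[of E i], of M] by (auto simp: top_unique)
  qed
  moreover have "(\<Union>i. disjointed E i) = space M" using E K(3) by (simp add: UN_disjointed_eq)
  ultimately show ?thesis using disjoint_family_disjointed that by blast
qed

locale poisson_join = poisson_suspension M P
  for M :: "'a measure" and P :: "('a set \<Rightarrow> ennreal) measure" +
  fixes C \<alpha> \<beta> :: "'a set set"
  assumes sub_C: "sub_sigma_algebra_of M C"
    and sub_\<alpha>: "sub_sigma_algebra_of M \<alpha>" and sub_\<beta>: "sub_sigma_algebra_of M \<beta>"
    and finite_C: "sigma_finite_on M C" and nonatomic_C: "non_atomic_on M C"
begin

abbreviation "CA \<equiv> join_alg M C \<alpha>"
abbreviation "CB \<equiv> join_alg M C \<beta>"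

definition R :: "('a set \<Rightarrow> ennreal) measure" where
  "R = sigma (Xstar M) (susp_alg M CA \<union> susp_alg M CB)"

lemma space_R: "space R = Xstar M"
  and sets_R: "sets R = join_alg_star (space P) (susp_alg M CA) (susp_alg M CB)"
  using susp_alg_Pow[of M CA] susp_alg_Pow[of M CB]
  by (auto simp: R_def join_alg_star_def space_P)

lemma sub_CA: "sub_sigma_algebra_of M CA" and sub_CB: "sub_sigma_algebra_of M CB"
  using sub_C sub_\<alpha> sub_\<beta> by (auto intro: join_alg_sub_sigma_algebra)

lemma sigma_algebras: "sigma_algebra (space M) C" "sigma_algebra (space M) \<alpha>" "sigma_algebra (space M) \<beta>"
  and sub_sets: "C \<subseteq> sets M" "\<alpha> \<subseteq> sets M" "\<beta> \<subseteq> sets M"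
  using sub_C sub_\<alpha> sub_\<beta> by (auto simp: sub_sigma_algebra_of_def)

lemma count_measurable_R:
  assumes "A \<in> CA \<union> CB"
  shows "(\<lambda>\<gamma>. \<gamma> A) \<in> borel_measurable R"
proof (rule measurableI)
  fix S :: "ennreal set" assume "S \<in> sets borel"
  then have "{\<gamma> \<in> Xstar M. \<gamma> A \<in> S} \<in> susp_alg M CA \<union> susp_alg M CB"
    using assms count_event_susp_alg by blast
  then show "(\<lambda>\<gamma>. \<gamma> A) -` S \<inter> space R \<in> sets R"
    using susp_alg_Pow[of M CA] susp_alg_Pow[of M CB] unfolding R_def
    by (auto simp: vimage_def Int_def conj_commute)
qed auto

lemma cell_minima_measurable_R:
  assumes Q: "\<And>i. Q i \<in> C" and a: "a \<in> \<alpha>" and b: "b \<in> \<beta>"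
  shows "(\<lambda>\<gamma>. \<Sum>i. min (\<gamma> (Q i \<inter> a)) (\<gamma> (Q i \<inter> b))) \<in> borel_measurable R"
proof -
  interpret CA: sigma_algebra "space M" CA using sub_CA by (simp add: sub_sigma_algebra_of_def)
  interpret CB: sigma_algebra "space M" CB using sub_CB by (simp add: sub_sigma_algebra_of_def)
  have "Q i \<inter> a \<in> CA" "Q i \<inter> b \<in> CB" for i
    using CA.Int[OF subsetD[OF join_alg_upper(1) Q] subsetD[OF join_alg_upper(2) a]]
      CB.Int[OF subsetD[OF join_alg_upper(1) Q] subsetD[OF join_alg_upper(2) b]] .
  note [measurable] = count_measurable_R[OF UnI1[OF this(1)]] count_measurable_R[OF UnI2[OF this(2)]]
  show ?thesis by measurable
qed

(* Key step: for a box F \<inter> a \<inter> b with F \<in> C of finite measure, the count is a.e. determined by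
   the counts on the cells Q \<inter> a \<in> C \<or> \<alpha> and Q \<inter> b \<in> C \<or> \<beta> of ever finer C-partitions of F,
   since eventually every cell holds at most one point. *)
lemma ae_borel_box:
  assumes F: "F \<in> C" "emeasure M F \<noteq> \<infinity>" and a: "a \<in> \<alpha>" and b: "b \<in> \<beta>"
  shows "ae_borel P R (\<lambda>\<gamma>. \<gamma> (F \<inter> a \<inter> b))"
proof -
  have "\<exists>Q :: nat \<Rightarrow> 'a set. (\<forall>i. Q i \<in> C) \<and> disjoint_family Q \<and> (\<Union>i. Q i) = F \<and>
          (\<forall>i. measure M (Q i) \<le> (1/2)^n)" for n
    by (rule partition_small[OF sigma_algebras(1) sub_sets(1) nonatomic_C F, of "(1/2)^n"]) (simp, blast)
  then obtain Q :: "nat \<Rightarrow> nat \<Rightarrow> 'a set" where Q: "\<And>n i. Q n i \<in> C" "\<And>n. disjoint_family (Q n)"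
      "\<And>n. (\<Union>i. Q n i) = F" "\<And>n i. measure M (Q n i) \<le> (1/2)^n"
    by metis
  have QM: "range (Q n) \<subseteq> sets M" for n using Q(1) sub_sets by auto
  have FM: "F \<in> sets M" and ab: "a \<in> sets M" "b \<in> sets M" using F(1) a b sub_sets by auto
  define h where "h n \<gamma> = (\<Sum>i. min (\<gamma> (Q n i \<inter> a)) (\<gamma> (Q n i \<inter> b)))"
    for n and \<gamma> :: "'a set \<Rightarrow> ennreal"
  have "h n \<in> borel_measurable R" for n
    unfolding h_def using Q(1) a b by (rule cell_minima_measurable_R)
  moreover have "AE \<gamma> in P. eventually (\<lambda>n. h n \<gamma> = \<gamma> (F \<inter> a \<inter> b)) sequentially"
    using AE_eventually_simple[OF FM F(2) QM Q(2-4)] AE_space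
  proof eventually_elim
    case (elim \<gamma>)
    then have g: "\<gamma> \<in> Xstar M" by (simp add: space_P)
    from elim(1) show ?case
    proof (rule eventually_mono)
      fix n assume "\<forall>i. \<gamma> (Q n i) \<le> 1"
      then show "h n \<gamma> = \<gamma> (F \<inter> a \<inter> b)"
        unfolding h_def by (intro config_partition_min[OF g QM Q(2,3) ab, symmetric]) auto
    qed
  qed
  ultimately show ?thesis by (rule ae_borel_eventually)
qed

definition boxes :: "'a set set" where
  "boxes = {c \<inter> a \<inter> b | c a b. c \<in> C \<and> a \<in> \<alpha> \<and> b \<in> \<beta>}"

lemma boxes_Int_stable: "Int_stable boxes"
  unfolding Int_stable_def
proof (intro ballI)
  interpret C: sigma_algebra "space M" C by (rule sigma_algebras)
  interpret \<alpha>: sigma_algebra "space M" \<alpha> by (rule sigma_algebras)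
  interpret \<beta>: sigma_algebra "space M" \<beta> by (rule sigma_algebras)
  fix x y assume "x \<in> boxes" "y \<in> boxes"
  then obtain c a b c' a' b' where "x = c \<inter> a \<inter> b" "c \<in> C" "a \<in> \<alpha>" "b \<in> \<beta>"
    and "y = c' \<inter> a' \<inter> b'" "c' \<in> C" "a' \<in> \<alpha>" "b' \<in> \<beta>"
    unfolding boxes_def by blast
  moreover from this have "x \<inter> y = (c \<inter> c') \<inter> (a \<inter> a') \<inter> (b \<inter> b')" by blast
  ultimately show "x \<inter> y \<in> boxes" unfolding boxes_def by blast
qed

lemma sigma_boxes_sets: "sigma_sets (space M) boxes \<subseteq> sets M"
  using sub_sets by (intro sets.sigma_sets_subset) (auto simp: boxes_def)

lemma boxes_Pow: "boxes \<subseteq> Pow (space M)"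
  using sigma_boxes_sets sets.sets_into_space by auto

lemma join_sub_sigma_boxes: "join_alg M CA \<beta> \<subseteq> sigma_sets (space M) boxes"
proof -
  have top: "space M \<in> C" "space M \<in> \<alpha>" "space M \<in> \<beta>"
    using sigma_algebras by (auto intro: algebra.top sigma_algebra.axioms)
  have C_boxes: "C \<subseteq> boxes"
  proof
    fix c assume c: "c \<in> C"
    then have "c = c \<inter> space M \<inter> space M" using sub_sets sets.sets_into_space by blast
    then show "c \<in> boxes" using c top unfolding boxes_def by blast
  qed
  have \<alpha>_boxes: "\<alpha> \<subseteq> boxes"
  proof
    fix a assume a: "a \<in> \<alpha>"
    then have "a = space M \<inter> a \<inter> space M" using sub_sets sets.sets_into_space by blast
    then show "a \<in> boxes" using a top unfolding boxes_def by blast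
  qed
  have \<beta>_boxes: "\<beta> \<subseteq> boxes"
  proof
    fix b assume b: "b \<in> \<beta>"
    then have "b = space M \<inter> space M \<inter> b" using sub_sets sets.sets_into_space by blast
    then show "b \<in> boxes" using b top unfolding boxes_def by blast
  qed
  have "CA \<subseteq> sigma_sets (space M) boxes"
    unfolding join_alg_def using C_boxes \<alpha>_boxes by (intro sigma_sets_subseteq) blast
  moreover have "\<beta> \<subseteq> sigma_sets (space M) boxes" using \<beta>_boxes by (auto intro: sigma_sets.Basic)
  ultimately have "CA \<union> \<beta> \<subseteq> sigma_sets (space M) boxes" by blast
  then show ?thesis unfolding join_alg_def[of M CA] by (rule sigma_sets_mono)
qed

lemma ae_borel_local:
  assumes E: "E \<in> C" "emeasure M E \<noteq> \<infinity>" and A: "A \<in> sigma_sets (space M) boxes"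
  shows "ae_borel P R (\<lambda>\<gamma>. \<gamma> (A \<inter> E))"
  using boxes_Int_stable boxes_Pow A
proof (induction rule: sigma_sets_induct_disjoint)
  case (basic A)
  then obtain c a b where A: "A = c \<inter> a \<inter> b" "c \<in> C" "a \<in> \<alpha>" "b \<in> \<beta>" unfolding boxes_def by blast
  interpret C: sigma_algebra "space M" C by (rule sigma_algebras)
  have cE: "c \<inter> E \<in> C" using A(2) E(1) by auto
  have "emeasure M (c \<inter> E) \<le> emeasure M E" using E(1) sub_sets by (intro emeasure_mono) auto
  then have "emeasure M (c \<inter> E) \<noteq> \<infinity>" using E(2) by (auto simp: top_unique)
  from ae_borel_box[OF cE this A(3,4)] show ?case by (simp add: A(1) Int_ac)
next
  case empty
  show ?case by (rule ae_borel_cong[OF ae_borelI[of "\<lambda>_. 0"]]) (auto simp: space_P config_empty)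
next
  case (compl A)
  have EM: "E \<in> sets M" and AM: "A \<in> sets M" using E(1) compl(1) sub_sets sigma_boxes_sets by auto
  have "ae_borel P R (\<lambda>\<gamma>. \<gamma> E)"
    using E(1) join_alg_upper(1)[of C M \<alpha>] by (intro ae_borelI count_measurable_R) auto
  from ae_borel_diff[OF this compl(2)] have "ae_borel P R (\<lambda>\<gamma>. \<gamma> E - \<gamma> (A \<inter> E))" .
  moreover have "AE \<gamma> in P. \<gamma> E - \<gamma> (A \<inter> E) = \<gamma> ((space M - A) \<inter> E)"
    using AE_count_finite[OF EM E(2)] AE_space
  proof eventually_elim
    case (elim \<gamma>)
    then have g: "\<gamma> \<in> Xstar M" by (simp add: space_P)
    have "\<gamma> (A \<inter> E) \<noteq> \<infinity>"
      using config_mono[OF g _ EM, of "A \<inter> E"] AM EM elim(1) by (auto simp: top_unique)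
    moreover have "(space M - A) \<inter> E = E - A \<inter> E" using EM sets.sets_into_space by blast
    ultimately show ?case using AM EM by (simp add: config_diff[OF g])
  qed
  ultimately show ?case by (rule ae_borel_cong)
next
  case (union A)
  have AM: "range A \<subseteq> sets M" and EM: "E \<in> sets M"
    using union(2) E(1) sub_sets sigma_boxes_sets by auto
  have "AE \<gamma> in P. (\<Sum>i. \<gamma> (A i \<inter> E)) = \<gamma> ((\<Union>i. A i) \<inter> E)"
  proof (rule AE_I2)
    fix \<gamma> assume "\<gamma> \<in> space P"
    then have g: "\<gamma> \<in> Xstar M" by (simp add: space_P)
    have "(\<Sum>i. \<gamma> (A i \<inter> E)) = \<gamma> (\<Union>i. A i \<inter> E)"
      using AM EM union(1) by (intro config_suminf[OF g]) (auto simp: disjoint_family_on_def)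
    then show "(\<Sum>i. \<gamma> (A i \<inter> E)) = \<gamma> ((\<Union>i. A i) \<inter> E)" by simp
  qed
  with ae_borel_suminf[OF union(3)] show ?case by (rule ae_borel_cong)
qed

(* Gluing along a partition of the space into C-sets of finite measure. *)
lemma ae_borel_count:
  assumes A: "A \<in> join_alg M CA \<beta>"
  shows "ae_borel P R (\<lambda>\<gamma>. \<gamma> A)"
proof -
  obtain D :: "nat \<Rightarrow> 'a set" where D: "\<And>i. D i \<in> C" "\<And>i. emeasure M (D i) \<noteq> \<infinity>"
      "disjoint_family D" "(\<Union>i. D i) = space M"
    using sigma_finite_on_partition[OF sub_C finite_C] by metis
  have A_boxes: "A \<in> sigma_sets (space M) boxes" using A join_sub_sigma_boxes by auto
  have AM: "A \<in> sets M" and DM: "range D \<subseteq> sets M" using A_boxes sigma_boxes_sets D(1) sub_sets by auto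
  have "AE \<gamma> in P. (\<Sum>i. \<gamma> (A \<inter> D i)) = \<gamma> A"
  proof (rule AE_I2)
    fix \<gamma> assume "\<gamma> \<in> space P"
    then have g: "\<gamma> \<in> Xstar M" by (simp add: space_P)
    have "(\<Sum>i. \<gamma> (A \<inter> D i)) = \<gamma> (\<Union>i. A \<inter> D i)"
      using AM DM D(3) by (intro config_suminf[OF g]) (auto simp: disjoint_family_on_def)
    moreover have "(\<Union>i. A \<inter> D i) = A" using D(4) AM sets.sets_into_space by blast
    ultimately show "(\<Sum>i. \<gamma> (A \<inter> D i)) = \<gamma> A" by simp
  qed
  with ae_borel_suminf[OF ae_borel_local[OF D(1,2) A_boxes]] show ?thesis by (rule ae_borel_cong)
qed

lemma sets_R_sub_susp_join: "sets R \<subseteq> susp_alg M (join_alg M CA \<beta>)"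
proof -
  have "CB \<subseteq> join_alg M CA \<beta>"
    unfolding join_alg_def[of M C \<beta>] join_alg_def[of M CA \<beta>]
    using join_alg_upper(1)[of C M \<alpha>] by (intro sigma_sets_subseteq) auto
  then have "susp_alg M CA \<union> susp_alg M CB \<subseteq> susp_alg M (join_alg M CA \<beta>)"
    using susp_alg_mono join_alg_upper(1)[of CA M \<beta>] by blast
  then show ?thesis
    unfolding sets_R join_alg_star_def space_P susp_alg_def[of M "join_alg M CA \<beta>"]
    by (rule sigma_sets_mono)
qed

lemma susp_join_sub_sets_P: "susp_alg M (join_alg M CA \<beta>) \<subseteq> sets P"
  unfolding sets_P using join_sub_sigma_boxes sigma_boxes_sets by (intro susp_alg_mono) auto

lemma event_null_approx:
  assumes A: "A \<in> join_alg M CA \<beta>" and S: "S \<in> sets borel"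
  shows "\<exists>Y\<in>sets R. sym_diff {\<gamma> \<in> Xstar M. \<gamma> A \<in> S} Y \<in> null_sets P"
proof -
  obtain g where g: "g \<in> borel_measurable R" "AE \<gamma> in P. \<gamma> A = g \<gamma>"
    using ae_borel_count[OF A] unfolding ae_borel_def by blast
  define Y where "Y = g -` S \<inter> space R"
  have Y: "Y \<in> sets R" unfolding Y_def using measurable_sets[OF g(1) S] .
  have "{\<gamma> \<in> Xstar M. \<gamma> A \<in> S} \<in> sets P"
    using count_event_susp_alg[OF A S] susp_join_sub_sets_P by blast
  moreover have "Y \<in> sets P" using Y sets_R_sub_susp_join susp_join_sub_sets_P by blast
  moreover obtain N where N: "{\<gamma> \<in> space P. \<gamma> A \<noteq> g \<gamma>} \<subseteq> N" "N \<in> null_sets P"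
    using g(2) by (auto elim!: AE_E)
  moreover have "sym_diff {\<gamma> \<in> Xstar M. \<gamma> A \<in> S} Y \<subseteq> N"
    using N(1) by (auto simp: Y_def space_R space_P)
  ultimately have "sym_diff {\<gamma> \<in> Xstar M. \<gamma> A \<in> S} Y \<in> null_sets P"
    by (intro null_sets_subset[OF N(2)]) auto
  with Y show ?thesis by blast
qed

theorem eq_mod_joins: "eq_mod P (susp_alg M (join_alg M CA \<beta>)) (sets R)"
  unfolding eq_mod_def
proof (intro conjI ballI)
  fix X assume "X \<in> susp_alg M (join_alg M CA \<beta>)"
  then show "\<exists>Y\<in>sets R. sym_diff X Y \<in> null_sets P"
    unfolding susp_alg_def space_P[symmetric]
  proof (rule null_approx_sigma_sets)
    show "sigma_algebra (space P) (sets R)" using sets.sigma_algebra_axioms[of R] by (simp add: space_R space_P)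
    show "sets R \<subseteq> sets P" using sets_R_sub_susp_join susp_join_sub_sets_P by blast
    show "{{\<gamma> \<in> space P. \<gamma> A \<in> S} |A S. A \<in> join_alg M CA \<beta> \<and> S \<in> sets borel} \<subseteq> sets P"
      by (auto simp: space_P intro!: subsetD[OF susp_join_sub_sets_P] count_event_susp_alg)
  qed (use event_null_approx in \<open>auto simp: space_P\<close>)
next
  fix Y assume "Y \<in> sets R"
  then show "\<exists>X\<in>susp_alg M (join_alg M CA \<beta>). sym_diff X Y \<in> null_sets P"
    using sets_R_sub_susp_join by (intro bexI[of _ Y]) auto
qed

end

theorem lemma2p3:
  fixes M :: "'a::polish_space measure"
    and P :: "('a set \<Rightarrow> ennreal) measure"
    and \<alpha> \<beta> C :: "'a set set"
  assumes "sets M = sets borel"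
    and "sigma_finite_measure M"
    and "sub_sigma_algebra_of M \<alpha>" and "sub_sigma_algebra_of M \<beta>" and "sub_sigma_algebra_of M C"
    and "sigma_finite_on M C" and "non_atomic_on M C"
    and "is_poisson_suspension M P"
  shows "eq_mod P
           (susp_alg M (join_alg M (join_alg M C \<alpha>) \<beta>))
           (join_alg_star (space P) (susp_alg M (join_alg M C \<alpha>)) (susp_alg M (join_alg M C \<beta>)))"
proof -
  interpret poisson_join M P C \<alpha> \<beta>
    using assms(3-8) by unfold_locales
  show ?thesis using eq_mod_joins by (simp only: sets_R)
qed

end
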